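(* Let $n, s, t$ be positive integers. Let $S_1,\dots, S_s \subseteq \{1,\dots,n\}$ be non-empty pairwise disjoint sets and $T_1,\dots, T_t \subseteq \{1,\dots,n\}$ be non-empty pairwise disjoint sets such that: 1. $\bigcup_{p=1}^s S_p = \bigcup_{q=1}^t T_q=\{1,\dots,n\}$. 2. For any subsets $\theta_1 \subseteq \{1,\dots,s\}$ and $\theta_2 \subseteq \{1,\dots,t\}$, if $\bigcup_{p \in\theta_1} S_p = \bigcup_{q \in\theta_2} T_q=\Gamma$ for some $\Gamma \subseteq \{1,\dots,n\}$, then $\Gamma \in \{\emptyset, \{1,\dots,n\}\}$. Then there exist an integer $l\geq 2$ and a finite sequence of sets $L_1,\dots, L_l \in \{S_1,\dots, S_s\} \cup \{T_1, \dots, T_t\}$ such that $\bigcup_{p=1}^l L_p = \{1,\dots,n\}$, and for all $p \in \{1,\dots,l-1\}$, $(L_1 \cup \dots \cup L_p) \cap L_{p+1} \neq \emptyset$. *)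

theory Defs
  imports Main
begin

end

theory Submission
  imports Defs
begin

text \<open>
  Grow a chain of blocks greedily, starting from S 1 and a T-block meeting it. As long as
  the union U of the chain is a proper non-empty subset of {1..n}, some block meets U
  without lying inside it: otherwise U would be both the union of the S-blocks inside it
  and the union of the T-blocks inside it, contradicting indecomposability. Appending such
  a block keeps the chain linked and strictly enlarges its union, so the process ends with
  a chain covering {1..n}.
\<close>

lemma UN_atLeastAtMost_fun_upd_Suc:
  assumes "p \<le> l"
  shows "(\<Union>i\<in>{1..p}. (L(Suc l := X)) i) = (\<Union>i\<in>{1..p}. L i)"
  using assms by (intro SUP_cong) auto

lemma UN_atLeastAtMost_Suc_fun_upd:
  "(\<Union>i\<in>{1..Suc l}. (L(Suc l := X)) i) = (\<Union>i\<in>{1..l}. L i) \<union> X"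
proof -
  have "{1..Suc l} = insert (Suc l) {1..l}" by auto
  then show ?thesis
    using UN_atLeastAtMost_fun_upd_Suc[of l l L X] by auto
qed

definition linked_chain :: "'a set set \<Rightarrow> nat \<Rightarrow> (nat \<Rightarrow> 'a set) \<Rightarrow> bool" where
  "linked_chain F l L \<longleftrightarrow>
     (\<forall>p\<in>{1..l}. L p \<in> F) \<and> (\<forall>p\<in>{1..l-1}. (\<Union>i\<in>{1..p}. L i) \<inter> L (p+1) \<noteq> {})"

lemma linked_chain_pair:
  assumes "X \<in> F" "Y \<in> F" "X \<inter> Y \<noteq> {}"
  shows "linked_chain F 2 (\<lambda>i. if i = 1 then X else Y)"
  using assms unfolding linked_chain_def by (auto simp: numeral_2_eq_2 le_Suc_eq)

lemma linked_chain_snoc: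
  assumes chain: "linked_chain F l L" and "X \<in> F" and meets: "(\<Union>i\<in>{1..l}. L i) \<inter> X \<noteq> {}"
  shows "linked_chain F (Suc l) (L(Suc l := X))"
  unfolding linked_chain_def
proof (intro conjI ballI)
  fix p assume "p \<in> {1..Suc l}"
  then show "(L(Suc l := X)) p \<in> F" using chain \<open>X \<in> F\<close> unfolding linked_chain_def by auto
next
  fix p assume p: "p \<in> {1..Suc l - 1}"
  then have "p \<le> l" by simp
  show "(\<Union>i\<in>{1..p}. (L(Suc l := X)) i) \<inter> (L(Suc l := X)) (p + 1) \<noteq> {}"
  proof (cases "p = l")
    case True
    then show ?thesis using meets UN_atLeastAtMost_fun_upd_Suc[of l l] by simp
  next
    case False
    with p have "p \<in> {1..l-1}" by auto
    then have "(\<Union>i\<in>{1..p}. L i) \<inter> L (p + 1) \<noteq> {}"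
      using chain unfolding linked_chain_def by blast
    moreover have "(L(Suc l := X)) (p + 1) = L (p + 1)" using \<open>p \<le> l\<close> False by simp
    ultimately show ?thesis using UN_atLeastAtMost_fun_upd_Suc[OF \<open>p \<le> l\<close>] by metis
  qed
qed

lemma linked_chain_extends_to_cover:
  assumes "finite V" and F_sub: "\<forall>X\<in>F. X \<subseteq> V"
    and cross: "\<And>U. U \<subseteq> V \<Longrightarrow> U \<noteq> {} \<Longrightarrow> U \<noteq> V \<Longrightarrow> \<exists>X\<in>F. X \<inter> U \<noteq> {} \<and> \<not> X \<subseteq> U"
    and "linked_chain F l L" and "(\<Union>i\<in>{1..l}. L i) \<noteq> {}"
  shows "\<exists>l' L'. l \<le> l' \<and> linked_chain F l' L' \<and> (\<Union>i\<in>{1..l'}. L' i) = V"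
  using assms(4,5)
proof (induction "card (V - (\<Union>i\<in>{1..l}. L i))" arbitrary: l L rule: less_induct)
  case less
  define U where "U = (\<Union>i\<in>{1..l}. L i)"
  show ?case
  proof (cases "U = V")
    case True
    then show ?thesis using less.prems unfolding U_def by blast
  next
    case False
    have "U \<subseteq> V" using less.prems(1) F_sub unfolding U_def linked_chain_def by fastforce
    moreover have "U \<noteq> {}" using less.prems(2) unfolding U_def .
    ultimately obtain X where X: "X \<in> F" "U \<inter> X \<noteq> {}" "\<not> X \<subseteq> U"
      using cross False by blast
    have chain': "linked_chain F (Suc l) (L(Suc l := X))"
      using linked_chain_snoc[OF less.prems(1) X(1)] X(2) unfolding U_def .
    have union': "(\<Union>i\<in>{1..Suc l}. (L(Suc l := X)) i) = U \<union> X"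
      unfolding U_def by (rule UN_atLeastAtMost_Suc_fun_upd)
    have "V - (U \<union> X) \<subset> V - U" using X F_sub by blast
    then have "card (V - (U \<union> X)) < card (V - U)"
      using \<open>finite V\<close> by (simp add: psubset_card_mono)
    moreover have "(\<Union>i\<in>{1..Suc l}. (L(Suc l := X)) i) \<noteq> {}" using union' X(2) by blast
    ultimately obtain l' L' where "Suc l \<le> l'" "linked_chain F l' L'" "(\<Union>i\<in>{1..l'}. L' i) = V"
      using less.hyps[OF _ chain'] union' unfolding U_def by metis
    then show ?thesis by (intro exI[of _ l'] exI[of _ L']) simp
  qed
qed

lemma UN_blocks_inside_eq:
  assumes "U \<subseteq> (\<Union>p\<in>I. S p)" and "\<forall>p\<in>I. S p \<inter> U = {} \<or> S p \<subseteq> U"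
  shows "(\<Union>p\<in>{p\<in>I. S p \<subseteq> U}. S p) = U"
proof
  show "U \<subseteq> (\<Union>p\<in>{p\<in>I. S p \<subseteq> U}. S p)"
  proof
    fix x assume "x \<in> U"
    then obtain p where "p \<in> I" "x \<in> S p" using assms(1) by blast
    with assms(2) \<open>x \<in> U\<close> show "x \<in> (\<Union>p\<in>{p\<in>I. S p \<subseteq> U}. S p)" by blast
  qed
qed auto

lemma crossing_block_of_indecomposable_covers:
  assumes S_cover: "(\<Union>p\<in>I. S p) = V" and T_cover: "(\<Union>q\<in>J. T q) = V"
    and indec: "\<And>\<theta>1 \<theta>2 \<Gamma>. \<theta>1 \<subseteq> I \<Longrightarrow> \<theta>2 \<subseteq> J \<Longrightarrow>
                  (\<Union>p\<in>\<theta>1. S p) = \<Gamma> \<Longrightarrow> (\<Union>q\<in>\<theta>2. T q) = \<Gamma> \<Longrightarrow> \<Gamma> \<in> {{}, V}"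
    and "U \<subseteq> V" "U \<noteq> {}" "U \<noteq> V"
  shows "\<exists>X\<in>S ` I \<union> T ` J. X \<inter> U \<noteq> {} \<and> \<not> X \<subseteq> U"
proof (rule ccontr)
  assume no_crossing: "\<not> ?thesis"
  have "(\<Union>p\<in>{p\<in>I. S p \<subseteq> U}. S p) = U"
  proof (rule UN_blocks_inside_eq)
    show "U \<subseteq> (\<Union>p\<in>I. S p)" using \<open>U \<subseteq> V\<close> S_cover by simp
    show "\<forall>p\<in>I. S p \<inter> U = {} \<or> S p \<subseteq> U" using no_crossing by blast
  qed
  moreover have "(\<Union>q\<in>{q\<in>J. T q \<subseteq> U}. T q) = U"
  proof (rule UN_blocks_inside_eq)
    show "U \<subseteq> (\<Union>q\<in>J. T q)" using \<open>U \<subseteq> V\<close> T_cover by simp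
    show "\<forall>q\<in>J. T q \<inter> U = {} \<or> T q \<subseteq> U" using no_crossing by blast
  qed
  ultimately have "U \<in> {{}, V}" by (rule indec[rotated 2]) auto
  with \<open>U \<noteq> {}\<close> \<open>U \<noteq> V\<close> show False by blast
qed

theorem lemma1:
  fixes n s t :: nat and S T :: "nat \<Rightarrow> nat set"
  assumes "n \<ge> 1" and "s \<ge> 1" and "t \<ge> 1"
    and S_sub: "\<forall>p\<in>{1..s}. S p \<subseteq> {1..n} \<and> S p \<noteq> {}"
    and T_sub: "\<forall>q\<in>{1..t}. T q \<subseteq> {1..n} \<and> T q \<noteq> {}"
    and S_disj: "\<forall>p\<in>{1..s}. \<forall>p'\<in>{1..s}. p \<noteq> p' \<longrightarrow> S p \<inter> S p' = {}"
    and T_disj: "\<forall>q\<in>{1..t}. \<forall>q'\<in>{1..t}. q \<noteq> q' \<longrightarrow> T q \<inter> T q' = {}"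
    and S_cover: "(\<Union>p\<in>{1..s}. S p) = {1..n}"
    and T_cover: "(\<Union>q\<in>{1..t}. T q) = {1..n}"
    and indec: "\<forall>\<theta>1 \<theta>2 \<Gamma>. \<theta>1 \<subseteq> {1..s} \<and> \<theta>2 \<subseteq> {1..t} \<and>
                  (\<Union>p\<in>\<theta>1. S p) = \<Gamma> \<and> (\<Union>q\<in>\<theta>2. T q) = \<Gamma>
                  \<longrightarrow> \<Gamma> \<in> {{}, {1..n}}"
  shows "\<exists>l::nat. \<exists>L :: nat \<Rightarrow> nat set. l \<ge> 2 \<and>
           (\<forall>p\<in>{1..l}. L p \<in> S ` {1..s} \<union> T ` {1..t}) \<and>
           (\<Union>p\<in>{1..l}. L p) = {1..n} \<and>
           (\<forall>p\<in>{1..l-1}. (\<Union>i\<in>{1..p}. L i) \<inter> L (p+1) \<noteq> {})"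
proof -
  let ?F = "S ` {1..s} \<union> T ` {1..t}"
  have "1 \<in> {1..s}" using \<open>s \<ge> 1\<close> by simp
  then obtain x where x: "x \<in> S 1" "x \<in> {1..n}" using S_sub by blast
  then obtain q where q: "q \<in> {1..t}" "x \<in> T q" using T_cover by blast
  define L0 where "L0 = (\<lambda>i::nat. if i = 1 then S 1 else T q)"
  have chain: "linked_chain ?F 2 L0"
    unfolding L0_def by (rule linked_chain_pair) (use \<open>1 \<in> {1..s}\<close> q x in auto)
  have "L0 1 \<subseteq> (\<Union>i\<in>{1..2}. L0 i)" by (rule UN_upper) simp
  moreover have "L0 1 = S 1" unfolding L0_def by simp
  ultimately have nonempty: "(\<Union>i\<in>{1..2}. L0 i) \<noteq> {}" using x(1) by blast
  have cross: "\<exists>X\<in>?F. X \<inter> U \<noteq> {} \<and> \<not> X \<subseteq> U"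
    if "U \<subseteq> {1..n}" "U \<noteq> {}" "U \<noteq> {1..n}" for U
  proof (rule crossing_block_of_indecomposable_covers[OF S_cover T_cover _ that])
    fix \<theta>1 \<theta>2 \<Gamma>
    assume "\<theta>1 \<subseteq> {1..s}" "\<theta>2 \<subseteq> {1..t}" "(\<Union>p\<in>\<theta>1. S p) = \<Gamma>" "(\<Union>q\<in>\<theta>2. T q) = \<Gamma>"
    then show "\<Gamma> \<in> {{}, {1..n}}" using indec[rule_format, of \<theta>1 \<theta>2 \<Gamma>] by blast
  qed
  have F_sub: "\<forall>X\<in>?F. X \<subseteq> {1..n}" using S_sub T_sub by blast
  obtain l L where "2 \<le> l" "linked_chain ?F l L" "(\<Union>i\<in>{1..l}. L i) = {1..n}"
    using linked_chain_extends_to_cover[OF finite_atLeastAtMost F_sub cross chain nonempty] by blast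
  then show ?thesis unfolding linked_chain_def by blast
qed

end
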